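(* Let $n\ge 2$, let $X_2,\ldots,X_n$ be independent and uniformly distributed on $\{0,1\}$, and let $X_1=1-\prod_{i=2}^n X_i$. Then (a) $X_1,\ldots,X_n$ satisfy negative regression; and (b) for $f(X)=\sum_{i=1}^n X_i$ and $Y_k=\mathbb{E}[f(X)\mid X_1,\ldots,X_k]$, we have $Y_0=\frac{n+1}{2}-\frac{1}{2^{n-1}}$, and on the event $\{X_1=0\}$, which has probability $2^{-(n-1)}$, $Y_1=n-1$; in particular $Y_1-Y_0=\frac{n-3}{2}+\frac{1}{2^{n-1}}$ on this event.
   Context: For $S\subseteq[n]$, $X_S\in\{0,1\}^S$ denotes the tuple $(X_i)_{i\in S}$. The variables $X_1,\ldots,X_n$ satisfy negative regression if for all disjoint $I,J\subseteq[n]$, every non-decreasing function $g:\{0,1\}^I\to\mathbb{R}$, and all $a\le b$ in $\{0,1\}^J$ (coordinatewise) such that $\Pr[X_J=a]>0$ and $\Pr[X_J=b]>0$, we have $\mathbb{E}[g(X_I)\mid X_J=a]\ge \mathbb{E}[g(X_I)\mid X_J=b]$. *)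

theory Defs
  imports "HOL-Probability.Probability"
begin

definition cond_expect :: "'w pmf \<Rightarrow> 'w set \<Rightarrow> ('w \<Rightarrow> real) \<Rightarrow> real" where
  "cond_expect M A h = measure_pmf.expectation (cond_pmf M A) h"

(* For S a set of indices,
  X_S is represented by restrict (X w) S, an element of S ->E {0,1}. *)
definition neg_regression :: "nat \<Rightarrow> 'w pmf \<Rightarrow> ('w \<Rightarrow> nat \<Rightarrow> nat) \<Rightarrow> bool" where
  "neg_regression n M X \<longleftrightarrow>
     (\<forall>I J (g :: (nat \<Rightarrow> nat) \<Rightarrow> real) a b.
        I \<subseteq> {1..n} \<longrightarrow> J \<subseteq> {1..n} \<longrightarrow> I \<inter> J = {} \<longrightarrow>
        monotone_on (I \<rightarrow>\<^sub>E {0,1}) (\<le>) (\<le>) g \<longrightarrow>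
        a \<in> J \<rightarrow>\<^sub>E {0,1} \<longrightarrow> b \<in> J \<rightarrow>\<^sub>E {0,1} \<longrightarrow> a \<le> b \<longrightarrow>
        measure_pmf.prob M {\<omega>. restrict (X \<omega>) J = a} > 0 \<longrightarrow>
        measure_pmf.prob M {\<omega>. restrict (X \<omega>) J = b} > 0 \<longrightarrow>
        cond_expect M {\<omega>. restrict (X \<omega>) J = a} (\<lambda>\<omega>. g (restrict (X \<omega>) I))
        \<ge> cond_expect M {\<omega>. restrict (X \<omega>) J = b} (\<lambda>\<omega>. g (restrict (X \<omega>) I)))"

(* The probability space: (X_2,...,X_n) uniform on {0,1}^{2..n}, i.e. independent uniform bits. *)
definition bits_pmf :: "nat \<Rightarrow> (nat \<Rightarrow> nat) pmf" where
  "bits_pmf n = pmf_of_set ({2..n} \<rightarrow>\<^sub>E {0,1})"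

definition Xv :: "nat \<Rightarrow> (nat \<Rightarrow> nat) \<Rightarrow> nat \<Rightarrow> nat" where
  "Xv n \<omega> i = (if i = 1 then 1 - (\<Prod>j\<in>{2..n}. \<omega> j) else \<omega> i)"

definition doob :: "'w pmf \<Rightarrow> ('w \<Rightarrow> nat \<Rightarrow> nat) \<Rightarrow> ('w \<Rightarrow> real) \<Rightarrow> nat \<Rightarrow> 'w \<Rightarrow> real" where
  "doob M X h k \<omega> = cond_expect M {\<omega>'. \<forall>i\<in>{1..k}. X \<omega>' i = X \<omega> i} h"

end

theory Submission
  imports Defs
begin

text \<open>
  The outcome space is the cube \<open>{0,1}\<^bsup>{2..n}\<^esup>\<close>, and \<open>X\<^sub>1 = 0\<close> exactly at its
  all-ones point. Conditioning on \<open>X\<^sub>J = c\<close> restricts the uniform measure to the subcube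
  fixing the coordinates in \<open>J - {1}\<close>, cut down by the all-ones point when \<open>1 \<in> J\<close>.
  Raising the fixed coordinates from \<open>a\<close> to \<open>b \<ge> a\<close> is a bijection between subcubes that
  does not decrease \<open>X\<^sub>2, \<dots>, X\<^sub>n\<close> and does not increase \<open>X\<^sub>1\<close>; since \<open>I\<close> misses
  \<open>J - {1}\<close>, it can only lower a monotone function of \<open>X\<^sub>I\<close>, so the average over the
  \<open>b\<close>-subcube is the smaller one. When \<open>1 \<in> J\<close> the function is maximal at the all-ones
  point, so removing that point lowers the \<open>b\<close>-average further, and if \<open>a\<^sub>1 = 0\<close> the
  conditional law is the point mass there. Part (b) is counting: each \<open>X\<^sub>i\<close> with
  \<open>i \<ge> 2\<close> has mean \<open>1/2\<close>, \<open>X\<^sub>1\<close> has mean \<open>1 - 1 / 2^(n-1)\<close>, and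
  \<open>X\<^sub>1 = 0\<close> determines the outcome, where the sum equals \<open>n - 1\<close>.
\<close>

definition average :: "('a \<Rightarrow> real) \<Rightarrow> 'a set \<Rightarrow> real" where
  "average h A = sum h A / card A"

lemma cond_expect_pmf_of_set:
  assumes "finite S" "S \<inter> A \<noteq> {}"
  shows "cond_expect (pmf_of_set S) A h = average h (S \<inter> A)"
proof -
  have "S \<noteq> {}" using assms by auto
  have "cond_pmf (pmf_of_set S) A = pmf_of_set (S \<inter> A)"
  proof (rule pmf_eqI)
    fix x
    have "set_pmf (pmf_of_set S) \<inter> A \<noteq> {}" using assms \<open>S \<noteq> {}\<close> by simp
    then show "pmf (cond_pmf (pmf_of_set S) A) x = pmf (pmf_of_set (S \<inter> A)) x"
      using assms \<open>S \<noteq> {}\<close>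
      by (auto simp: pmf_cond measure_pmf_of_set indicator_def card_gt_0_iff)
  qed
  then show ?thesis
    using assms by (simp add: cond_expect_def average_def integral_pmf_of_set)
qed

lemma cond_expect_UNIV: "cond_expect M UNIV h = measure_pmf.expectation M h"
proof -
  have "cond_pmf M UNIV = M"
    by (rule pmf_eqI) (simp add: pmf_cond set_pmf_not_empty)
  then show ?thesis by (simp add: cond_expect_def)
qed

lemma doob_0: "doob M X h 0 \<omega> = measure_pmf.expectation M h"
  by (simp add: doob_def cond_expect_UNIV)

lemma doob_1: "doob M X h 1 \<omega> = cond_expect M {\<omega>'. X \<omega>' 1 = X \<omega> 1} h"
  by (simp add: doob_def)

lemma average_le_of_bij_betw:
  assumes "bij_betw \<phi> A B" "finite A" "\<And>x. x \<in> A \<Longrightarrow> h (\<phi> x) \<le> h x"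
  shows "average h B \<le> average h A"
proof -
  have "sum h B = (\<Sum>x\<in>A. h (\<phi> x))" using sum.reindex_bij_betw[OF assms(1), of h] by simp
  also have "\<dots> \<le> sum h A" using assms(3) by (rule sum_mono)
  finally show ?thesis
    using bij_betw_same_card[OF assms(1)] by (simp add: average_def divide_right_mono)
qed

lemma average_le_bound:
  assumes "finite A" "A \<noteq> {}" "\<And>x. x \<in> A \<Longrightarrow> h x \<le> c"
  shows "average h A \<le> c"
proof -
  have "sum h A \<le> card A * c" using assms(3) sum_bounded_above by metis
  then show ?thesis
    using assms(1,2) by (simp add: average_def pos_divide_le_eq card_gt_0_iff mult.commute)
qed

lemma average_Diff_max_le:
  assumes "finite A" "t \<in> A" "A - {t} \<noteq> {}" "\<And>x. x \<in> A \<Longrightarrow> h x \<le> h t"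
  shows "average h (A - {t}) \<le> average h A"
proof -
  define s where "s = sum h (A - {t})"
  define m where "m = real (card (A - {t}))"
  have "card (A - {t}) > 0" using assms(1,3) by (simp add: card_gt_0_iff)
  then have "m > 0" by (simp add: m_def)
  have "s \<le> m * h t"
    unfolding s_def m_def using sum_bounded_above[of "A - {t}" h "h t"] assms(4) by auto
  then have "s / m \<le> (h t + s) / (m + 1)"
    using \<open>m > 0\<close> by (simp add: divide_simps algebra_simps)
  moreover have "sum h A = h t + s" using sum.remove[OF assms(1,2)] by (simp add: s_def)
  moreover have "real (card A) = m + 1"
    using card_Suc_Diff1[OF assms(1,2)] by (simp add: m_def)
  ultimately show ?thesis by (simp add: average_def s_def m_def)
qed

definition bit_cube :: "nat \<Rightarrow> (nat \<Rightarrow> nat) set" where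
  "bit_cube n = {2..n} \<rightarrow>\<^sub>E {0,1}"

definition all_ones :: "nat \<Rightarrow> nat \<Rightarrow> nat" where
  "all_ones n = restrict (\<lambda>_. 1) {2..n}"

definition subcube :: "nat \<Rightarrow> nat set \<Rightarrow> (nat \<Rightarrow> nat) \<Rightarrow> (nat \<Rightarrow> nat) set" where
  "subcube n K c = {\<omega> \<in> bit_cube n. \<forall>i\<in>K. \<omega> i = c i}"

lemma finite_bit_cube [simp]: "finite (bit_cube n)"
  by (simp add: bit_cube_def finite_PiE)

lemma all_ones_in_bit_cube [simp]: "all_ones n \<in> bit_cube n"
  by (simp add: bit_cube_def all_ones_def)

lemma bit_cube_not_empty [simp]: "bit_cube n \<noteq> {}"
  using all_ones_in_bit_cube by blast

lemma bits_pmf_eq: "bits_pmf n = pmf_of_set (bit_cube n)"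
  by (simp add: bits_pmf_def bit_cube_def)

lemma set_pmf_bits_pmf [simp]: "set_pmf (bits_pmf n) = bit_cube n"
  by (simp add: bits_pmf_eq)

lemma card_bit_cube: "card (bit_cube n) = 2 ^ (n - 1)"
  by (simp add: bit_cube_def card_PiE numeral_2_eq_2)

lemma bit_cube_le_1: "\<omega> \<in> bit_cube n \<Longrightarrow> i \<in> {2..n} \<Longrightarrow> \<omega> i \<le> 1"
  using PiE_mem[of \<omega> "{2..n}" "\<lambda>_. {0,1}" i] by (auto simp: bit_cube_def)

lemma Xv_1_eq:
  assumes "\<omega> \<in> bit_cube n"
  shows "Xv n \<omega> 1 = (if \<omega> = all_ones n then 0 else 1)"
proof (cases "\<omega> = all_ones n")
  case True
  then show ?thesis by (simp add: Xv_def all_ones_def)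
next
  case False
  have "\<exists>j\<in>{2..n}. \<omega> j \<noteq> 1"
  proof (rule ccontr)
    assume "\<not> ?thesis"
    then have "\<omega> = all_ones n"
      using assms by (intro extensionalityI[of _ "{2..n}"]) (auto simp: bit_cube_def all_ones_def PiE_iff)
    with False show False ..
  qed
  then obtain j where "j \<in> {2..n}" "\<omega> j \<noteq> 1" ..
  then have "\<omega> j = 0" using bit_cube_le_1[OF assms] by fastforce
  then have prod_0: "(\<Prod>i\<in>{2..n}. \<omega> i) = 0"
    using \<open>j \<in> {2..n}\<close> by (meson finite_atLeastAtMost prod_zero)
  show ?thesis using False by (simp add: Xv_def prod_0)
qed

lemma restrict_Xv_in_PiE:
  assumes "\<omega> \<in> bit_cube n" "I \<subseteq> {1..n}"
  shows "restrict (Xv n \<omega>) I \<in> I \<rightarrow>\<^sub>E {0,1}"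
  unfolding restrict_PiE_iff
proof
  fix i assume "i \<in> I"
  show "Xv n \<omega> i \<in> {0,1}"
  proof (cases "i = 1")
    case False
    with assms \<open>i \<in> I\<close> have "\<omega> i \<le> 1" by (intro bit_cube_le_1) auto
    with False show ?thesis by (auto simp: Xv_def)
  qed (auto simp: Xv_def)
qed

lemma restrict_Xv_antimono:
  assumes "\<omega> \<in> bit_cube n" "\<omega>' \<in> bit_cube n" "\<And>i. i \<in> {2..n} \<Longrightarrow> \<omega> i \<le> \<omega>' i"
    and "\<And>i. i \<in> I - {1} \<Longrightarrow> \<omega> i = \<omega>' i"
  shows "restrict (Xv n \<omega>') I \<le> restrict (Xv n \<omega>) I"
proof -
  have "(\<Prod>i\<in>{2..n}. \<omega> i) \<le> (\<Prod>i\<in>{2..n}. \<omega>' i)"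
    using assms(3) by (intro prod_mono) auto
  then show ?thesis using assms(4) by (auto simp: le_fun_def Xv_def)
qed

lemma restrict_Xv_le_all_ones:
  assumes "\<omega> \<in> bit_cube n" "I \<subseteq> {2..n}"
  shows "restrict (Xv n \<omega>) I \<le> restrict (Xv n (all_ones n)) I"
proof (unfold le_fun_def, intro allI)
  fix i
  show "restrict (Xv n \<omega>) I i \<le> restrict (Xv n (all_ones n)) I i"
    using assms bit_cube_le_1[OF assms(1), of i] by (auto simp: Xv_def all_ones_def)
qed

lemma override_in_subcube:
  assumes "\<omega> \<in> bit_cube n" "K \<subseteq> {2..n}" "\<forall>i\<in>K. c i \<in> {0,1}"
  shows "(\<lambda>i. if i \<in> K then c i else \<omega> i) \<in> subcube n K c"
  using assms by (auto simp: subcube_def bit_cube_def PiE_iff extensional_def)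

lemma bij_betw_subcube_override:
  assumes "K \<subseteq> {2..n}" "\<forall>i\<in>K. a i \<in> {0,1}" "\<forall>i\<in>K. b i \<in> {0,1}"
  shows "bij_betw (\<lambda>\<omega> i. if i \<in> K then b i else \<omega> i) (subcube n K a) (subcube n K b)"
proof (rule bij_betw_byWitness[where f' = "\<lambda>\<omega> i. if i \<in> K then a i else \<omega> i"])
  show "(\<lambda>\<omega> i. if i \<in> K then b i else \<omega> i) ` subcube n K a \<subseteq> subcube n K b"
    using override_in_subcube[OF _ assms(1,3)] by (auto simp: subcube_def)
  show "(\<lambda>\<omega> i. if i \<in> K then a i else \<omega> i) ` subcube n K b \<subseteq> subcube n K a"
    using override_in_subcube[OF _ assms(1,2)] by (auto simp: subcube_def)
qed (auto simp: subcube_def)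

lemma average_subcube_antimono:
  assumes "K \<subseteq> {2..n}" "\<forall>i\<in>K. a i \<in> {0,1}" "\<forall>i\<in>K. b i \<in> {0,1}" "\<forall>i\<in>K. a i \<le> b i"
    and h_anti: "\<And>\<omega> \<omega>'. \<omega> \<in> bit_cube n \<Longrightarrow> \<omega>' \<in> bit_cube n \<Longrightarrow> (\<And>i. \<omega> i \<le> \<omega>' i) \<Longrightarrow>
      (\<And>i. i \<notin> K \<Longrightarrow> \<omega> i = \<omega>' i) \<Longrightarrow> h \<omega>' \<le> h \<omega>"
  shows "average h (subcube n K b) \<le> average h (subcube n K a)"
proof (rule average_le_of_bij_betw[OF bij_betw_subcube_override[OF assms(1-3)]])
  fix \<omega> assume \<omega>: "\<omega> \<in> subcube n K a"
  show "h (\<lambda>i. if i \<in> K then b i else \<omega> i) \<le> h \<omega>"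
  proof (rule h_anti)
    show "(\<lambda>i. if i \<in> K then b i else \<omega> i) \<in> bit_cube n"
      using override_in_subcube[OF _ assms(1,3)] \<omega> by (auto simp: subcube_def)
  qed (use \<omega> assms(4) in \<open>auto simp: subcube_def\<close>)
qed (simp add: subcube_def)

lemma bit_cube_Int_Xv_event:
  assumes "c \<in> extensional J"
  shows "bit_cube n \<inter> {\<omega>. restrict (Xv n \<omega>) J = c}
    = subcube n (J - {1}) c \<inter> {\<omega>. 1 \<in> J \<longrightarrow> Xv n \<omega> 1 = c 1}"
  using assms by (auto simp: subcube_def fun_eq_iff extensional_def Xv_def)

lemma average_subcube_Diff_all_ones_antimono:
  assumes "K \<subseteq> {2..n}" "\<forall>i\<in>K. b i \<in> {0,1}" "\<forall>i\<in>K. a i \<le> b i"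
    and le: "average h (subcube n K b) \<le> average h (subcube n K a)"
    and h_max: "\<And>\<omega>. \<omega> \<in> bit_cube n \<Longrightarrow> h \<omega> \<le> h (all_ones n)"
    and ne: "subcube n K b - {all_ones n} \<noteq> {}"
  shows "average h (subcube n K b - {all_ones n}) \<le> average h (subcube n K a - {all_ones n})"
proof (cases "all_ones n \<in> subcube n K a")
  case True
  then have "\<forall>i\<in>K. a i = 1"
    using assms(1) by (fastforce simp: subcube_def all_ones_def subset_iff)
  with assms(2,3) have "\<forall>i\<in>K. a i = b i" by fastforce
  then show ?thesis by (simp add: subcube_def)
next
  case False
  have "average h (subcube n K b - {all_ones n}) \<le> average h (subcube n K b)"
  proof (cases "all_ones n \<in> subcube n K b")
    case True
    then show ?thesis using ne h_max by (intro average_Diff_max_le) (auto simp: subcube_def)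
  qed simp
  with le False show ?thesis by simp
qed

lemma average_Xv_event_antimono:
  fixes g :: "(nat \<Rightarrow> nat) \<Rightarrow> real"
  assumes I: "I \<subseteq> {1..n}" and J: "J \<subseteq> {1..n}" and IJ: "I \<inter> J = {}"
    and g: "monotone_on (I \<rightarrow>\<^sub>E {0,1}) (\<le>) (\<le>) g"
    and a: "a \<in> J \<rightarrow>\<^sub>E {0,1}" and b: "b \<in> J \<rightarrow>\<^sub>E {0,1}" and "a \<le> b"
  defines "E \<equiv> \<lambda>c. bit_cube n \<inter> {\<omega>. restrict (Xv n \<omega>) J = c}"
    and "h \<equiv> \<lambda>\<omega>. g (restrict (Xv n \<omega>) I)"
  assumes "E a \<noteq> {}" "E b \<noteq> {}"
  shows "average h (E b) \<le> average h (E a)"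
proof -
  define K where "K = J - {1}"
  have K: "K \<subseteq> {2..n}" using J by (auto simp: K_def)
  have ab: "\<forall>i\<in>K. a i \<in> {0,1}" "\<forall>i\<in>K. b i \<in> {0,1}" "\<forall>i\<in>K. a i \<le> b i"
    using a b \<open>a \<le> b\<close> by (auto simp: K_def le_fun_def)
  have h_mono: "h \<omega>' \<le> h \<omega>" if "\<omega> \<in> bit_cube n" "\<omega>' \<in> bit_cube n"
    "restrict (Xv n \<omega>') I \<le> restrict (Xv n \<omega>) I" for \<omega> \<omega>'
    using g restrict_Xv_in_PiE[OF _ I] that by (auto simp: h_def monotone_on_def)
  have subcube_le: "average h (subcube n K b) \<le> average h (subcube n K a)"
  proof (rule average_subcube_antimono[OF K ab])
    fix \<omega> \<omega>' assume "\<omega> \<in> bit_cube n" "\<omega>' \<in> bit_cube n" "\<And>i. \<omega> i \<le> \<omega>' i"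
      and "\<And>i. i \<notin> K \<Longrightarrow> \<omega> i = \<omega>' i"
    then show "h \<omega>' \<le> h \<omega>"
      using IJ by (intro h_mono restrict_Xv_antimono) (auto simp: K_def)
  qed
  have E: "E c = subcube n K c \<inter> {\<omega>. 1 \<in> J \<longrightarrow> Xv n \<omega> 1 = c 1}"
    if "c \<in> J \<rightarrow>\<^sub>E {0,1}" for c
    using bit_cube_Int_Xv_event[of c J n] that by (simp add: E_def K_def PiE_iff)
  show ?thesis
  proof (cases "1 \<in> J")
    case False
    then show ?thesis using subcube_le E[OF a] E[OF b] by simp
  next
    case True
    have "I \<subseteq> {2..n}"
    proof
      fix i assume "i \<in> I"
      then have "i \<in> {1..n}" "i \<noteq> 1" using I IJ True by auto
      then show "i \<in> {2..n}" by auto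
    qed
    then have h_max: "h \<omega> \<le> h (all_ones n)" if "\<omega> \<in> bit_cube n" for \<omega>
      using that by (intro h_mono restrict_Xv_le_all_ones) auto
    have E_subcube: "E c \<subseteq> bit_cube n" for c by (simp add: E_def)
    have "a 1 \<in> {0,1}" "b 1 \<in> {0,1}" "a 1 \<le> b 1"
      using a b \<open>a \<le> b\<close> True by (auto simp: le_fun_def)
    then consider "a 1 = 0" | "a 1 = 1" "b 1 = 1" by fastforce
    then show ?thesis
    proof cases
      case 1
      then have "E a = {all_ones n}"
        using \<open>E a \<noteq> {}\<close> E[OF a] True Xv_1_eq by (auto simp: subcube_def split: if_splits)
      moreover have "average h (E b) \<le> h (all_ones n)"
        using \<open>E b \<noteq> {}\<close> E_subcube h_max finite_subset[OF E_subcube]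
        by (intro average_le_bound) auto
      ultimately show ?thesis by (simp add: average_def)
    next
      case 2
      then have "E c = subcube n K c - {all_ones n}" if "c \<in> {a, b}" for c
        using that E[OF a] E[OF b] True Xv_1_eq by (auto simp: subcube_def split: if_splits)
      then show ?thesis
        using \<open>E b \<noteq> {}\<close> average_subcube_Diff_all_ones_antimono[OF K ab(2,3) subcube_le h_max]
        by simp
    qed
  qed
qed

lemma neg_regression_bits_pmf: "neg_regression n (bits_pmf n) (Xv n)"
  unfolding neg_regression_def
proof (intro allI impI)
  fix I J a b and g :: "(nat \<Rightarrow> nat) \<Rightarrow> real"
  assume I: "I \<subseteq> {1..n}" and J: "J \<subseteq> {1..n}" and IJ: "I \<inter> J = {}"
    and g: "monotone_on (I \<rightarrow>\<^sub>E {0,1}) (\<le>) (\<le>) g"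
    and a: "a \<in> J \<rightarrow>\<^sub>E {0,1}" and b: "b \<in> J \<rightarrow>\<^sub>E {0,1}" and ab: "a \<le> b"
    and pos: "measure_pmf.prob (bits_pmf n) {\<omega>. restrict (Xv n \<omega>) J = a} > 0"
      "measure_pmf.prob (bits_pmf n) {\<omega>. restrict (Xv n \<omega>) J = b} > 0"
  have "bit_cube n \<inter> {\<omega>. restrict (Xv n \<omega>) J = c} \<noteq> {}" if "c \<in> {a, b}" for c
  proof
    assume "bit_cube n \<inter> {\<omega>. restrict (Xv n \<omega>) J = c} = {}"
    then have "measure_pmf.prob (bits_pmf n) {\<omega>. restrict (Xv n \<omega>) J = c} = 0"
      by (simp add: measure_pmf_zero_iff)
    with that pos show False by auto
  qed
  then show "cond_expect (bits_pmf n) {\<omega>. restrict (Xv n \<omega>) J = a} (\<lambda>\<omega>. g (restrict (Xv n \<omega>) I))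
      \<ge> cond_expect (bits_pmf n) {\<omega>. restrict (Xv n \<omega>) J = b} (\<lambda>\<omega>. g (restrict (Xv n \<omega>) I))"
    using average_Xv_event_antimono[OF I J IJ g a b ab]
    by (simp add: bits_pmf_eq cond_expect_pmf_of_set)
qed

lemma sum_bit_cube_coord:
  assumes i: "i \<in> {2..n}"
  shows "(\<Sum>\<omega>\<in>bit_cube n. real (\<omega> i)) = 2 ^ (n - 1) / 2"
proof -
  define toggle where "toggle \<omega> = fun_upd \<omega> i (1 - \<omega> i)" for \<omega> :: "nat \<Rightarrow> nat"
  have toggle: "toggle \<omega> \<in> bit_cube n" "toggle (toggle \<omega>) = \<omega>"
    "real (toggle \<omega> i) = 1 - real (\<omega> i)" if "\<omega> \<in> bit_cube n" for \<omega>
  proof -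
    show "toggle \<omega> \<in> bit_cube n"
      using that i by (auto simp: toggle_def bit_cube_def PiE_iff extensional_def)
    have "\<omega> i \<le> 1" using that i by (rule bit_cube_le_1)
    then show "toggle (toggle \<omega>) = \<omega>" "real (toggle \<omega> i) = 1 - real (\<omega> i)"
      by (auto simp: toggle_def)
  qed
  have "(\<Sum>\<omega>\<in>bit_cube n. 1 - real (\<omega> i)) = (\<Sum>\<omega>\<in>bit_cube n. real (\<omega> i))"
    by (rule sum.reindex_bij_witness[where i = toggle and j = toggle]) (simp_all add: toggle)
  then show ?thesis by (simp add: sum_subtractf card_bit_cube)
qed

lemma bit_cube_Int_Xv_1_eq_0: "bit_cube n \<inter> {\<omega>. Xv n \<omega> 1 = 0} = {all_ones n}"
  using Xv_1_eq[of _ n] by (auto split: if_splits)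

lemma sum_bit_cube_Xv_1: "(\<Sum>\<omega>\<in>bit_cube n. real (Xv n \<omega> 1)) = 2 ^ (n - 1) - 1"
proof -
  have "(\<Sum>\<omega>\<in>bit_cube n. real (Xv n \<omega> 1)) = (\<Sum>\<omega>\<in>bit_cube n - {all_ones n}. 1)"
    using Xv_1_eq by (intro sum.mono_neutral_cong_right) auto
  also have "\<dots> = 2 ^ (n - 1) - 1"
    by (simp add: card_bit_cube)
  finally show ?thesis .
qed

lemma sum_Xv_eq:
  assumes "n \<ge> 1"
  shows "(\<Sum>i\<in>{1..n}. Xv n \<omega> i) = Xv n \<omega> 1 + (\<Sum>i\<in>{2..n}. \<omega> i)"
proof -
  have "(\<Sum>i\<in>{1..n}. Xv n \<omega> i) = Xv n \<omega> 1 + (\<Sum>i\<in>{2..n}. Xv n \<omega> i)"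
    using assms sum.atLeast_Suc_atMost[of 1 n "Xv n \<omega>"] by (simp add: numeral_2_eq_2)
  also have "(\<Sum>i\<in>{2..n}. Xv n \<omega> i) = (\<Sum>i\<in>{2..n}. \<omega> i)"
    by (rule sum.cong) (auto simp: Xv_def)
  finally show ?thesis .
qed

lemma sum_bit_cube_sum_Xv:
  assumes "n \<ge> 1"
  shows "(\<Sum>\<omega>\<in>bit_cube n. real (\<Sum>i\<in>{1..n}. Xv n \<omega> i))
    = 2 ^ (n - 1) - 1 + (real n - 1) * 2 ^ (n - 1) / 2"
proof -
  have "(\<Sum>\<omega>\<in>bit_cube n. real (\<Sum>i\<in>{1..n}. Xv n \<omega> i))
      = (\<Sum>\<omega>\<in>bit_cube n. real (Xv n \<omega> 1)) + (\<Sum>i\<in>{2..n}. \<Sum>\<omega>\<in>bit_cube n. real (\<omega> i))"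
    unfolding sum_Xv_eq[OF assms] by (simp add: sum.distrib sum.swap[of _ "bit_cube n"])
  also have "(\<Sum>i\<in>{2..n}. \<Sum>\<omega>\<in>bit_cube n. real (\<omega> i)) = (\<Sum>i\<in>{2..n}. 2 ^ (n - 1) / 2)"
    by (rule sum.cong) (simp_all add: sum_bit_cube_coord)
  finally show ?thesis
    using assms sum_bit_cube_Xv_1[of n] by (simp add: of_nat_diff)
qed

lemma sum_Xv_all_ones:
  assumes "n \<ge> 1"
  shows "(\<Sum>i\<in>{1..n}. Xv n (all_ones n) i) = n - 1"
proof -
  have "(\<Sum>i\<in>{2..n}. all_ones n i) = (\<Sum>i\<in>{2..n}. 1)"
    by (rule sum.cong) (simp_all add: all_ones_def)
  then show ?thesis
    using assms Xv_1_eq[OF all_ones_in_bit_cube, of n] unfolding sum_Xv_eq[OF assms] by simp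
qed

lemma prob_Xv_1_eq_0: "measure_pmf.prob (bits_pmf n) {\<omega>. Xv n \<omega> 1 = 0} = 1 / 2 ^ (n - 1)"
proof -
  have "measure_pmf.prob (pmf_of_set (bit_cube n)) {\<omega>. Xv n \<omega> 1 = 0}
      = card (bit_cube n \<inter> {\<omega>. Xv n \<omega> 1 = 0}) / card (bit_cube n)"
    by (simp add: measure_pmf_of_set)
  then show ?thesis unfolding bits_pmf_eq bit_cube_Int_Xv_1_eq_0 by (simp add: card_bit_cube)
qed

theorem mainTheorem5:
  fixes n :: nat
  assumes "n \<ge> 2"
  defines "f \<equiv> (\<lambda>\<omega>. real (\<Sum>i\<in>{1..n}. Xv n \<omega> i))"
  shows "neg_regression n (bits_pmf n) (Xv n)
    \<and> (\<forall>\<omega>\<in>set_pmf (bits_pmf n).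
         doob (bits_pmf n) (Xv n) f 0 \<omega> = (real n + 1) / 2 - 1 / 2 ^ (n - 1))
    \<and> measure_pmf.prob (bits_pmf n) {\<omega>. Xv n \<omega> 1 = 0} = 1 / 2 ^ (n - 1)
    \<and> (\<forall>\<omega>\<in>set_pmf (bits_pmf n). Xv n \<omega> 1 = 0 \<longrightarrow>
         doob (bits_pmf n) (Xv n) f 1 \<omega> = real n - 1
         \<and> doob (bits_pmf n) (Xv n) f 1 \<omega> - doob (bits_pmf n) (Xv n) f 0 \<omega>
             = (real n - 3) / 2 + 1 / 2 ^ (n - 1))"
proof -
  have Y0: "doob (bits_pmf n) (Xv n) f 0 \<omega> = (real n + 1) / 2 - 1 / 2 ^ (n - 1)" for \<omega>
    using sum_bit_cube_sum_Xv assms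
    by (simp add: doob_0 f_def bits_pmf_eq integral_pmf_of_set card_bit_cube field_simps)
  have Y1: "doob (bits_pmf n) (Xv n) f 1 \<omega> = real n - 1" if "Xv n \<omega> 1 = 0" for \<omega>
  proof -
    have "doob (bits_pmf n) (Xv n) f 1 \<omega> = cond_expect (bits_pmf n) {\<omega>'. Xv n \<omega>' 1 = 0} f"
      unfolding doob_1 that ..
    also have "\<dots> = f (all_ones n)"
      using cond_expect_pmf_of_set[of "bit_cube n" "{\<omega>'. Xv n \<omega>' 1 = 0}" f]
      unfolding bits_pmf_eq bit_cube_Int_Xv_1_eq_0 by (simp add: average_def)
    finally show ?thesis
      using assms sum_Xv_all_ones[of n] by (simp add: f_def of_nat_diff flip: of_nat_sum)
  qed
  have "real n - 1 - ((real n + 1) / 2 - 1 / 2 ^ (n - 1)) = (real n - 3) / 2 + 1 / 2 ^ (n - 1)"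
    by (simp add: field_simps)
  then show ?thesis
    using neg_regression_bits_pmf Y0 Y1 prob_Xv_1_eq_0 by simp
qed

end
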